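(* Let $\underline\Omega=\{L\in\mathbb R^{m_2\times d}: Q-L^\top R^vL\succ0\}$. In general the problem is nonconvex-nonconcave: there exist problem data and $L\in\underline\Omega$ such that $\min_K\mathcal C(K,L)$ is a nonconvex minimization problem (the set of $K$ for which $(K,L)$ is stabilizing, equivalently $\mathcal C(K,L)<\infty$, is nonconvex), and there exist problem data and $K$ such that $\max_{L\in\underline\Omega}\mathcal C(K,L)$ is a nonconcave maximization problem (the set of $L\in\underline\Omega$ for which $(K,L)$ is stabilizing is nonconvex).
   Context: Zero-sum LQ game: $A\in\mathbb R^{d\times d}$, $B\in\mathbb R^{d\times m_1}$, $C\in\mathbb R^{d\times m_2}$, symmetric positive definite $Q,R^u,R^v$; dynamics $x_{t+1}=Ax_t+Bu_t+Cv_t$, cost $x_t^\top Qx_t+u_t^\top R^uu_t-v_t^\top R^vv_t$, initial state $x_0\sim\mathcal D$ with $\Sigma_0=\mathbb E[x_0x_0^\top]\succ0$. Linear feedback policies $u_t=-Kx_t$, $v_t=-Lx_t$ with $K\in\mathbb R^{m_1\times d}$, $L\in\mathbb R^{m_2\times d}$; $(K,L)$ is stabilizing if $\rho(A-BK-CL)<1$. For such policies $\mathcal C(K,L)=\mathbb E_{x_0\sim\mathcal D}\sum_{t\ge0}[x_t^\top Qx_t+(Kx_t)^\top R^u(Kx_t)-(Lx_t)^\top R^v(Lx_t)]$ (possibly infinite). *)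

theory Defs
  imports "Jordan_Normal_Form.Spectral_Radius"
begin

definition sym_posdef :: "real mat \<Rightarrow> nat \<Rightarrow> bool" where
  "sym_posdef M n \<longleftrightarrow> M \<in> carrier_mat n n \<and> transpose_mat M = M \<and>
     (\<forall>x \<in> carrier_vec n. x \<noteq> 0\<^sub>v n \<longrightarrow> 0 < x \<bullet> (M *\<^sub>v x))"

definition lq_data :: "nat \<Rightarrow> nat \<Rightarrow> nat \<Rightarrow> real mat \<Rightarrow> real mat \<Rightarrow> real mat \<Rightarrow>
    real mat \<Rightarrow> real mat \<Rightarrow> real mat \<Rightarrow> bool" where
  "lq_data d m1 m2 A B C Q Ru Rv \<longleftrightarrow>
     A \<in> carrier_mat d d \<and> B \<in> carrier_mat d m1 \<and> C \<in> carrier_mat d m2 \<and>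
     sym_posdef Q d \<and> sym_posdef Ru m1 \<and> sym_posdef Rv m2"

definition stabilizing :: "real mat \<Rightarrow> real mat \<Rightarrow> real mat \<Rightarrow> real mat \<Rightarrow> real mat \<Rightarrow> bool" where
  "stabilizing A B C K L \<longleftrightarrow>
     spectral_radius (map_mat complex_of_real (A - B * K - C * L)) < 1"

definition Omega_under :: "nat \<Rightarrow> nat \<Rightarrow> real mat \<Rightarrow> real mat \<Rightarrow> real mat set" where
  "Omega_under d m2 Q Rv = {L \<in> carrier_mat m2 d. sym_posdef (Q - transpose_mat L * Rv * L) d}"

definition convex_mat_set :: "real mat set \<Rightarrow> bool" where
  "convex_mat_set S \<longleftrightarrow> (\<forall>X\<in>S. \<forall>Y\<in>S. \<forall>t::real. 0 \<le> t \<and> t \<le> 1 \<longrightarrow>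
      t \<cdot>\<^sub>m X + (1 - t) \<cdot>\<^sub>m Y \<in> S)"

end

theory Submission imports Defs begin

text \<open>Take A = 0 and let one player's input matrix be the identity, the other's zero, so that
the closed-loop matrix is minus the active player's gain. The nilpotent gains N12 and N21 then have
spectral radius 0, while minus their midpoint, the matrix with both off-diagonal entries -1, has the
eigenvalue 1 (eigenvector (1, -1)); so the set of stabilizing gains is not convex. For the
maximizing player, Q = 5 I keeps both nilpotent gains inside Omega-underbar.\<close>

lemma sym_posdef_diag:
  assumes pos: "\<And>i. i < n \<Longrightarrow> 0 < f i"
  shows "sym_posdef (mat n n (\<lambda>(i,j). if i = j then f i else 0)) n"
proof -
  let ?M = "mat n n (\<lambda>(i,j). if i = j then f i else 0) :: real mat"
  have "0 < x \<bullet> (?M *\<^sub>v x)" if x: "x \<in> carrier_vec n" and nz: "x \<noteq> 0\<^sub>v n" for x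
  proof -
    have Mx: "?M *\<^sub>v x = vec n (\<lambda>i. f i * x $ i)"
    proof (rule eq_vecI)
      fix i assume "i < dim_vec (vec n (\<lambda>i. f i * x $ i))"
      hence i: "i < n" by simp
      have "row ?M i \<bullet> x = (\<Sum>j<n. (if i = j then f i else 0) * x $ j)"
        using x i by (simp add: scalar_prod_def lessThan_atLeast0)
      also have "\<dots> = (\<Sum>j<n. if j = i then f i * x $ i else 0)"
        by (rule sum.cong) auto
      finally show "(?M *\<^sub>v x) $ i = vec n (\<lambda>i. f i * x $ i) $ i" using i by simp
    qed (use x in simp)
    have quad: "x \<bullet> (?M *\<^sub>v x) = (\<Sum>i\<in>{0..<n}. f i * (x $ i)\<^sup>2)"
      unfolding Mx scalar_prod_def using x by (auto intro!: sum.cong simp: power2_eq_square)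
    obtain k where k: "k < n" "x $ k \<noteq> 0"
      using nz x by (metis eq_vecI carrier_vecD index_zero_vec dim_vec)
    have "0 < f k * (x $ k)\<^sup>2" using pos k by simp
    also have "\<dots> \<le> (\<Sum>i\<in>{0..<n}. f i * (x $ i)\<^sup>2)"
      by (rule member_le_sum) (use pos k in \<open>auto simp: less_imp_le\<close>)
    finally show ?thesis unfolding quad .
  qed
  moreover have "transpose_mat ?M = ?M" by (auto intro!: eq_matI)
  ultimately show ?thesis unfolding sym_posdef_def by auto
qed

lemma sym_posdef_one: "sym_posdef (1\<^sub>m n) n"
proof -
  have "1\<^sub>m n = (mat n n (\<lambda>(i,j). if i = j then 1 else 0) :: real mat)"
    by (auto intro!: eq_matI)
  thus ?thesis using sym_posdef_diag[of n "\<lambda>_. 1"] by simp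
qed

lemma spectral_radius_square_zero:
  assumes M: "(M :: complex mat) \<in> carrier_mat n n" and n: "0 < n" and MM: "M * M = 0\<^sub>m n n"
  shows "spectral_radius M = 0"
proof -
  have "spectrum M \<subseteq> {0}"
  proof
    fix k assume "k \<in> spectrum M"
    then obtain v where v: "v \<in> carrier_vec n" "v \<noteq> 0\<^sub>v n" "M *\<^sub>v v = k \<cdot>\<^sub>v v"
      unfolding spectrum_def eigenvalue_def eigenvector_def using M by auto
    have "0\<^sub>v n = (M * M) *\<^sub>v v" using MM v by auto
    also have "\<dots> = M *\<^sub>v (M *\<^sub>v v)" using M v by (simp add: assoc_mult_mat_vec)
    also have "\<dots> = (k * k) \<cdot>\<^sub>v v" using M v by (simp add: mult_mat_vec smult_smult_assoc)
    finally have kkv: "(k * k) \<cdot>\<^sub>v v = 0\<^sub>v n" by simp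
    obtain j where j: "j < n" "v $ j \<noteq> 0"
      using v by (metis eq_vecI carrier_vecD index_zero_vec dim_vec)
    have "(k * k) * v $ j = 0" using arg_cong[OF kkv, of "\<lambda>w. w $ j"] j v by simp
    thus "k \<in> {0}" using j by simp
  qed
  moreover have "spectral_radius M \<in> norm ` spectrum M"
    by (rule spectral_radius_mem_max(1)[OF M n])
  ultimately show ?thesis by auto
qed

lemma eigenvalue_norm_le_spectral_radius:
  assumes "(M :: complex mat) \<in> carrier_mat n n" "0 < n" "eigenvector M v k"
  shows "norm k \<le> spectral_radius M"
  using spectral_radius_mem_max(2)[OF assms(1,2)] assms(3)
  unfolding spectrum_def eigenvalue_def by auto

lemma not_convex_mat_setI:
  assumes "X \<in> S" "Y \<in> S" "(1/2) \<cdot>\<^sub>m X + (1 - 1/2) \<cdot>\<^sub>m Y \<notin> S"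
  shows "\<not> convex_mat_set S"
proof
  assume "convex_mat_set S"
  hence "(1/2) \<cdot>\<^sub>m X + (1 - 1/2) \<cdot>\<^sub>m Y \<in> S"
    using assms(1,2) unfolding convex_mat_set_def by (elim ballE allE[of _ "1/2"]) auto
  with assms(3) show False by contradiction
qed

lemma stabilizing_zero_dynamics_first_player:
  assumes "K \<in> carrier_mat d d"
  shows "stabilizing (0\<^sub>m d d) (1\<^sub>m d) (0\<^sub>m d m) K (0\<^sub>m m d) \<longleftrightarrow>
    spectral_radius (map_mat complex_of_real (- K)) < 1"
proof -
  have "0\<^sub>m d d - 1\<^sub>m d * K - 0\<^sub>m d m * 0\<^sub>m m d = - K" using assms by (auto intro!: eq_matI)
  thus ?thesis unfolding stabilizing_def by simp
qed

lemma stabilizing_zero_dynamics_second_player: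
  assumes "L \<in> carrier_mat d d"
  shows "stabilizing (0\<^sub>m d d) (0\<^sub>m d m) (1\<^sub>m d) (0\<^sub>m m d) L \<longleftrightarrow>
    spectral_radius (map_mat complex_of_real (- L)) < 1"
proof -
  have "0\<^sub>m d d - 0\<^sub>m d m * 0\<^sub>m m d - 1\<^sub>m d * L = - L" using assms by (auto intro!: eq_matI)
  thus ?thesis unfolding stabilizing_def by simp
qed

definition N12 :: "real mat" where "N12 = mat 2 2 (\<lambda>(i,j). if i = 0 \<and> j = 1 then 2 else 0)"
definition N21 :: "real mat" where "N21 = mat 2 2 (\<lambda>(i,j). if i = 1 \<and> j = 0 then 2 else 0)"

abbreviation N_mid :: "real mat" where "N_mid \<equiv> (1/2) \<cdot>\<^sub>m N12 + (1 - 1/2) \<cdot>\<^sub>m N21"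

lemma N_carrier: "N12 \<in> carrier_mat 2 2" "N21 \<in> carrier_mat 2 2" "N_mid \<in> carrier_mat 2 2"
  unfolding N12_def N21_def by auto

lemma sum_upt_2: "(\<Sum>i\<in>{0..<2::nat}. g i) = g 0 + g 1"
  by (simp add: numeral_2_eq_2)

lemma spectral_radius_neg_N12_less_one: "spectral_radius (map_mat complex_of_real (- N12)) < 1"
proof -
  have "map_mat complex_of_real (- N12) * map_mat complex_of_real (- N12) = 0\<^sub>m 2 2"
    by (rule eq_matI) (auto simp: N12_def scalar_prod_def sum_upt_2 less_2_cases_iff)
  hence "spectral_radius (map_mat complex_of_real (- N12)) = 0"
    using N_carrier by (intro spectral_radius_square_zero[of _ 2]) auto
  thus ?thesis by simp
qed

lemma spectral_radius_neg_N21_less_one: "spectral_radius (map_mat complex_of_real (- N21)) < 1"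
proof -
  have "map_mat complex_of_real (- N21) * map_mat complex_of_real (- N21) = 0\<^sub>m 2 2"
    by (rule eq_matI) (auto simp: N21_def scalar_prod_def sum_upt_2 less_2_cases_iff)
  hence "spectral_radius (map_mat complex_of_real (- N21)) = 0"
    using N_carrier by (intro spectral_radius_square_zero[of _ 2]) auto
  thus ?thesis by simp
qed

lemma spectral_radius_neg_N_mid_not_less_one: "\<not> spectral_radius (map_mat complex_of_real (- N_mid)) < 1"
proof -
  let ?v = "vec 2 (\<lambda>i. if i = 0 then 1 else - 1) :: complex vec"
  have "?v $ 0 \<noteq> 0\<^sub>v 2 $ 0" by simp
  hence "?v \<noteq> 0\<^sub>v 2" by metis
  moreover have "map_mat complex_of_real (- N_mid) *\<^sub>v ?v = 1 \<cdot>\<^sub>v ?v"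
    by (rule eq_vecI) (auto simp: N12_def N21_def scalar_prod_def sum_upt_2 less_2_cases_iff)
  ultimately have "eigenvector (map_mat complex_of_real (- N_mid)) ?v 1"
    unfolding eigenvector_def using N_carrier by auto
  moreover have "map_mat complex_of_real (- N_mid) \<in> carrier_mat 2 2" using N_carrier by simp
  ultimately have "norm (1 :: complex) \<le> spectral_radius (map_mat complex_of_real (- N_mid))"
    by (intro eigenvalue_norm_le_spectral_radius[of _ 2]) simp_all
  thus ?thesis by simp
qed

definition Q5 :: "real mat" where "Q5 = mat 2 2 (\<lambda>(i,j). if i = j then 5 else 0)"

lemma sym_posdef_Q5: "sym_posdef Q5 2"
  unfolding Q5_def by (rule sym_posdef_diag) simp

lemma N12_Omega_under: "N12 \<in> Omega_under 2 2 Q5 (1\<^sub>m 2)"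
proof -
  have "Q5 - transpose_mat N12 * 1\<^sub>m 2 * N12 = mat 2 2 (\<lambda>(i,j). if i = j then (if i = 0 then 5 else 1) else 0)"
    by (rule eq_matI) (auto simp: Q5_def N12_def scalar_prod_def sum_upt_2 less_2_cases_iff)
  moreover have "sym_posdef (mat 2 2 (\<lambda>(i,j). if i = j then (if i = 0 then 5 else 1) else (0::real))) 2"
    by (rule sym_posdef_diag) simp
  ultimately show ?thesis unfolding Omega_under_def using N_carrier by auto
qed

lemma N21_Omega_under: "N21 \<in> Omega_under 2 2 Q5 (1\<^sub>m 2)"
proof -
  have "Q5 - transpose_mat N21 * 1\<^sub>m 2 * N21 = mat 2 2 (\<lambda>(i,j). if i = j then (if i = 0 then 1 else 5) else 0)"
    by (rule eq_matI) (auto simp: Q5_def N21_def scalar_prod_def sum_upt_2 less_2_cases_iff)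
  moreover have "sym_posdef (mat 2 2 (\<lambda>(i,j). if i = j then (if i = 0 then 1 else 5) else (0::real))) 2"
    by (rule sym_posdef_diag) simp
  ultimately show ?thesis unfolding Omega_under_def using N_carrier by auto
qed

theorem lemma2:
  shows "(\<exists>d m1 m2 A B C Q Ru Rv L. lq_data d m1 m2 A B C Q Ru Rv \<and>
            L \<in> Omega_under d m2 Q Rv \<and>
            \<not> convex_mat_set {K \<in> carrier_mat m1 d. stabilizing A B C K L}) \<and>
         (\<exists>d m1 m2 A B C Q Ru Rv K. lq_data d m1 m2 A B C Q Ru Rv \<and>
            K \<in> carrier_mat m1 d \<and>
            \<not> convex_mat_set {L \<in> Omega_under d m2 Q Rv. stabilizing A B C K L})"
proof (intro conjI exI)
  show "lq_data 2 2 1 (0\<^sub>m 2 2) (1\<^sub>m 2) (0\<^sub>m 2 1) (1\<^sub>m 2) (1\<^sub>m 2) (1\<^sub>m 1)"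
    and "lq_data 2 1 2 (0\<^sub>m 2 2) (0\<^sub>m 2 1) (1\<^sub>m 2) Q5 (1\<^sub>m 1) (1\<^sub>m 2)"
    unfolding lq_data_def using sym_posdef_one sym_posdef_Q5 by auto
  have "1\<^sub>m 2 - transpose_mat (0\<^sub>m 1 2) * 1\<^sub>m 1 * 0\<^sub>m 1 2 = (1\<^sub>m 2 :: real mat)"
    by (auto intro!: eq_matI)
  thus "0\<^sub>m 1 2 \<in> Omega_under 2 1 (1\<^sub>m 2) (1\<^sub>m 1)"
    unfolding Omega_under_def using sym_posdef_one by auto
  show "0\<^sub>m 1 2 \<in> carrier_mat 1 2" by simp
  show "\<not> convex_mat_set {K \<in> carrier_mat 2 2. stabilizing (0\<^sub>m 2 2) (1\<^sub>m 2) (0\<^sub>m 2 1) K (0\<^sub>m 1 2)}"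
    using N_carrier spectral_radius_neg_N12_less_one spectral_radius_neg_N21_less_one spectral_radius_neg_N_mid_not_less_one
    by (intro not_convex_mat_setI[of N12 _ N21]) (simp_all add: stabilizing_zero_dynamics_first_player)
  show "\<not> convex_mat_set {L \<in> Omega_under 2 2 Q5 (1\<^sub>m 2). stabilizing (0\<^sub>m 2 2) (0\<^sub>m 2 1) (1\<^sub>m 2) (0\<^sub>m 1 2) L}"
    using N_carrier spectral_radius_neg_N12_less_one spectral_radius_neg_N21_less_one spectral_radius_neg_N_mid_not_less_one
      N12_Omega_under N21_Omega_under
    by (intro not_convex_mat_setI[of N12 _ N21]) (simp_all add: stabilizing_zero_dynamics_second_player)
qed

end
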